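(* Let $\mathcal{S}$ be a finite set of road segments and $y_1,\dots,y_N$ (collectively $y_{[N]}$) the routes of $N$ historical trips, each a nonempty set of distinct segments. For each $n$ and $s\in y_n$ one observes $T'_{n,s}=\theta_s+\varepsilon_{n,s}$, where the $\theta_s$ are i.i.d. with mean $\mu$ and variance $\tau^2$, independent of the errors; for each $n$ the errors $(\varepsilon_{n,s})_{s\in y_n}$ have mean $0$ and covariances $\sigma_{s,t}$; errors from different trips are independent. Fix a route $y\subseteq\mathcal{S}$. (1) Let $\mathscr{S}_y$ be a partition of $y$ into nonempty disjoint sets (super-segments), and for a set $S$ of segments let $N_S=|\{n: S\subseteq y_n\}|$. For functions $\phi_S:\mathbb{Z}_{\ge0}\to\mathbb{R}$ with $\phi_S(0)=0$, consider the generalized segment-based estimator $$\hat\Theta^{(\mathrm{g\text{-}seg})}_y=\sum_{S\in\mathscr{S}_y}\Big[(1-\phi_S(N_S))|S|\mu+\phi_S(N_S)\frac{\sum_{n:S\subseteq y_n}\sum_{s\in S}T'_{n,s}}{N_S}\Big].$$ Its integrated risk is $$R\big(\hat\Theta^{(\mathrm{g\text{-}seg})}_y\mid y_{[N]}\big)=\sum_{S,T\in\mathscr{S}_y}\frac{N_{S\cup T}}{N_SN_T}\phi_S(N_S)\phi_T(N_T)\Big(\sum_{s\in S,t\in T}\sigma_{s,t}\Big)+\sum_{S\in\mathscr{S}_y}(1-\phi_S(N_S))^2|S|\tau^2.$$ (2) Let $\delta(y)$ be a set of historical routes (the neighborhood of $y$), $M_{\delta(y)}=\sum_{n=1}^N\mathbf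 1\{y_n\in\delta(y)\}$, $N^{\delta(y)}_s=|\{n: y_n\in\delta(y), s\in y_n\}|$, $N^{\delta(y)}_{s\cup t}=|\{n: y_n\in\delta(y), s,t\in y_n\}|$, $\mathcal{S}_{\delta(y)}=\bigcup_{y'\in\delta(y)}y'$, and $\bar y_{\delta(y)}=\sum_{n:y_n\in\delta(y)}|y_n|/M_{\delta(y)}$. For a function $\phi_{\delta(y)}:\mathbb{Z}_{\ge0}\to\mathbb{R}$ with $\phi_{\delta(y)}(0)=0$, consider the route-based estimator $$\hat\Theta^{(\mathrm{route})}_y=(1-\phi_{\delta(y)}(M_{\delta(y)}))|y|\mu+\phi_{\delta(y)}(M_{\delta(y)})\frac{\sum_{n:y_n\in\delta(y)}\sum_{s\in y_n}T'_{n,s}}{M_{\delta(y)}}.$$ Writing $\phi=\phi_{\delta(y)}(M_{\delta(y)})$ and $M=M_{\delta(y)}$, its integrated risk is $$R\big(\hat\Theta^{(\mathrm{route})}_y\mid y_{[N]}\big)=\Big(\frac{\phi}{M}\Big)^2\Big(\sum_{s,t\in\mathcal{S}_{\delta(y)}}N^{\delta(y)}_{s\cup t}\sigma_{s,t}\Big)+\big(\phi(\bar y_{\delta(y)}-|y|)\mu\big)^2+\sum_{s\in\mathcal{S}_{\delta(y)}\setminus y}\Big(\phi\frac{N^{\delta(y)}_s}{M}\Big)^2\tau^2+\sum_{s\in y}\Big(1-\phi\frac{N^{\delta(y)}_s}{M}\Big)^2\tau^2.$$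
   Context: Convention $0/0=0$. For a route $y$, the integrated risk of an estimator $\hat\Theta_y$ is $R(\hat\Theta_y\mid y_{[N]})=\mathbb{E}[(\hat\Theta_y-\sum_{s\in y}\theta_s)^2\mid y_{[N]}]$, the expectation taken over the errors and the prior distribution of $\theta$, conditional on the historical routes. For $s=t$, $N_{s\cup s}=N_s$ and $N^{\delta(y)}_{s\cup s}=N^{\delta(y)}_s$. No distributional assumption beyond means and covariances is imposed. *)

theory Defs
  imports "HOL-Probability.Probability" "HOL-Library.Disjoint_Sets"
begin

(* Historical trips are indexed by n \<in> {1..N}; Y n is the route of trip n. *)

definition Ncnt :: "(nat \<Rightarrow> 's set) \<Rightarrow> nat \<Rightarrow> 's set \<Rightarrow> nat" where
  "Ncnt Y N S = card {n \<in> {1..N}. S \<subseteq> Y n}"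

definition Mnb :: "(nat \<Rightarrow> 's set) \<Rightarrow> nat \<Rightarrow> 's set set \<Rightarrow> nat" where
  "Mnb Y N D = card {n \<in> {1..N}. Y n \<in> D}"

definition Nnb1 :: "(nat \<Rightarrow> 's set) \<Rightarrow> nat \<Rightarrow> 's set set \<Rightarrow> 's \<Rightarrow> nat" where
  "Nnb1 Y N D s = card {n \<in> {1..N}. Y n \<in> D \<and> s \<in> Y n}"

definition Nnb2 :: "(nat \<Rightarrow> 's set) \<Rightarrow> nat \<Rightarrow> 's set set \<Rightarrow> 's \<Rightarrow> 's \<Rightarrow> nat" where
  "Nnb2 Y N D s t = card {n \<in> {1..N}. Y n \<in> D \<and> s \<in> Y n \<and> t \<in> Y n}"

(* bar y_{delta(y)} (with 0/0 = 0, as real division in HOL) *)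
definition ybar :: "(nat \<Rightarrow> 's set) \<Rightarrow> nat \<Rightarrow> 's set set \<Rightarrow> real" where
  "ybar Y N D = (\<Sum>n\<in>{n \<in> {1..N}. Y n \<in> D}. real (card (Y n))) / real (Mnb Y N D)"

definition Tobs :: "('s \<Rightarrow> 'a \<Rightarrow> real) \<Rightarrow> (nat \<Rightarrow> 's \<Rightarrow> 'a \<Rightarrow> real) \<Rightarrow> nat \<Rightarrow> 's \<Rightarrow> 'a \<Rightarrow> real" where
  "Tobs \<theta> \<epsilon> n s \<omega> = \<theta> s \<omega> + \<epsilon> n s \<omega>"

definition gseg_est ::
  "(nat \<Rightarrow> 's set) \<Rightarrow> nat \<Rightarrow> ('s \<Rightarrow> 'a \<Rightarrow> real) \<Rightarrow> (nat \<Rightarrow> 's \<Rightarrow> 'a \<Rightarrow> real) \<Rightarrow> real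
    \<Rightarrow> 's set set \<Rightarrow> ('s set \<Rightarrow> nat \<Rightarrow> real) \<Rightarrow> 'a \<Rightarrow> real" where
  "gseg_est Y N \<theta> \<epsilon> \<mu> P \<phi> \<omega> =
     (\<Sum>S\<in>P. (1 - \<phi> S (Ncnt Y N S)) * real (card S) * \<mu>
        + \<phi> S (Ncnt Y N S) *
          ((\<Sum>n\<in>{n \<in> {1..N}. S \<subseteq> Y n}. \<Sum>s\<in>S. Tobs \<theta> \<epsilon> n s \<omega>) / real (Ncnt Y N S)))"

definition route_est ::
  "(nat \<Rightarrow> 's set) \<Rightarrow> nat \<Rightarrow> ('s \<Rightarrow> 'a \<Rightarrow> real) \<Rightarrow> (nat \<Rightarrow> 's \<Rightarrow> 'a \<Rightarrow> real) \<Rightarrow> real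
    \<Rightarrow> 's set \<Rightarrow> 's set set \<Rightarrow> (nat \<Rightarrow> real) \<Rightarrow> 'a \<Rightarrow> real" where
  "route_est Y N \<theta> \<epsilon> \<mu> y D \<phi> \<omega> =
     (1 - \<phi> (Mnb Y N D)) * real (card y) * \<mu>
     + \<phi> (Mnb Y N D) *
       ((\<Sum>n\<in>{n \<in> {1..N}. Y n \<in> D}. \<Sum>s\<in>Y n. Tobs \<theta> \<epsilon> n s \<omega>) / real (Mnb Y N D))"

(* integrated risk E[(est - sum_{s in y} theta_s)^2] (routes are fixed, i.e. conditioned on) *)
definition risk :: "'a measure \<Rightarrow> ('s \<Rightarrow> 'a \<Rightarrow> real) \<Rightarrow> 's set \<Rightarrow> ('a \<Rightarrow> real) \<Rightarrow> real" where
  "risk M \<theta> y est = integral\<^sup>L M (\<lambda>\<omega>. (est \<omega> - (\<Sum>s\<in>y. \<theta> s \<omega>))\<^sup>2)"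

end

theory Submission
  imports Defs
begin

(* Both estimators are affine in the observations, so the error est - sum_{s in y} theta_s is a
   constant plus a centred combination  sum_s a_s (theta_s - mu) + sum_n sum_{s in y_n} b_{n,s} eps_{n,s}.
   The prior deviations are independent with variance tau^2 and independent of the error vectors, which
   are independent across trips; hence the second moment of such a combination is
   tau^2 sum_s a_s^2 + sum_n sum_{s,t in y_n} b_{n,s} b_{n,t} sigma_{s,t}, and the risk is the squared
   constant plus this. For the segment-based estimator every super-segment S contributes one combination,
   and two of them share exactly the N_{S u T} trips containing S u T. For the route-based estimator,
   counting the neighbouring trips through each segment turns the coefficients into phi N_s / M and the
   constant into the bias phi (ybar - |y|) mu. *)

definition square_integrable :: "'a measure \<Rightarrow> ('a \<Rightarrow> real) \<Rightarrow> bool" where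
  "square_integrable M f \<longleftrightarrow> f \<in> borel_measurable M \<and> integrable M (\<lambda>x. (f x)\<^sup>2)"

lemma integrable_mult_if_square_integrable:
  assumes "square_integrable M f" "square_integrable M g"
  shows "integrable M (\<lambda>x. f x * g x)"
proof (rule Bochner_Integration.integrable_bound)
  show "integrable M (\<lambda>x. (f x)\<^sup>2 + (g x)\<^sup>2)" "(\<lambda>x. f x * g x) \<in> borel_measurable M"
    using assms by (auto simp: square_integrable_def)
  have "\<bar>a * b\<bar> \<le> a\<^sup>2 + b\<^sup>2" for a b :: real
    using sum_squares_bound[of "\<bar>a\<bar>" "\<bar>b\<bar>"] abs_ge_zero[of "a * b"]
    unfolding abs_mult power2_abs by linarith
  then show "AE x in M. norm (f x * g x) \<le> norm ((f x)\<^sup>2 + (g x)\<^sup>2)"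
    by simp
qed

lemma square_integrable_add:
  assumes "square_integrable M f" "square_integrable M g"
  shows "square_integrable M (\<lambda>x. f x + g x)"
proof -
  have "integrable M (\<lambda>x. (f x)\<^sup>2 + 2 * (f x * g x) + (g x)\<^sup>2)"
    using assms integrable_mult_if_square_integrable[OF assms] by (auto simp: square_integrable_def)
  then show ?thesis
    using assms by (auto simp: square_integrable_def power2_sum algebra_simps)
qed

lemma square_integrable_cmult: "square_integrable M f \<Longrightarrow> square_integrable M (\<lambda>x. c * f x)"
  by (auto simp: square_integrable_def power_mult_distrib)

lemma (in finite_measure) square_integrable_const: "square_integrable M (\<lambda>x. c)"
  by (simp add: square_integrable_def)

lemma (in finite_measure) square_integrable_sum:
  "(\<And>i. i \<in> I \<Longrightarrow> square_integrable M (f i)) \<Longrightarrow> square_integrable M (\<lambda>x. \<Sum>i\<in>I. f i x)"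
  by (induction I rule: infinite_finite_induct) (auto intro: square_integrable_add square_integrable_const)

lemma (in finite_measure) square_integrable_diff_const:
  "square_integrable M f \<Longrightarrow> square_integrable M (\<lambda>x. f x - c)"
  using square_integrable_add[OF _ square_integrable_const, of f "- c"] by simp

lemma (in finite_measure) integrable_if_square_integrable:
  "square_integrable M f \<Longrightarrow> integrable M f"
  by (auto simp: square_integrable_def intro: square_integrable_imp_integrable)

lemma integral_sum_mult_sum:
  assumes "\<And>i. i \<in> I \<Longrightarrow> square_integrable M (f i)" "\<And>j. j \<in> J \<Longrightarrow> square_integrable M (g j)"
  shows "(\<integral>x. (\<Sum>i\<in>I. f i x) * (\<Sum>j\<in>J. g j x) \<partial>M) = (\<Sum>i\<in>I. \<Sum>j\<in>J. \<integral>x. f i x * g j x \<partial>M)"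
  using assms
  by (simp add: sum_product integrable_mult_if_square_integrable integrable_sum
      Bochner_Integration.integral_sum)

lemma integral_scaled_mult:
  "(\<integral>x. c * f x * (d * g x) \<partial>M) = c * d * (\<integral>x. f x * g x \<partial>M :: real)"
  by (simp add: mult_ac)

lemma (in prob_space) integral_square_add_centered:
  assumes "square_integrable M f" "integral\<^sup>L M f = 0"
  shows "(\<integral>x. (c + f x)\<^sup>2 \<partial>M) = c\<^sup>2 + (\<integral>x. f x * f x \<partial>M)"
proof -
  have "integrable M f" "integrable M (\<lambda>x. f x * f x)"
    using assms by (auto intro: integrable_if_square_integrable integrable_mult_if_square_integrable)
  moreover have "(\<lambda>x. (c + f x)\<^sup>2) = (\<lambda>x. c\<^sup>2 + 2 * c * f x + f x * f x)"
    by (simp add: power2_eq_square algebra_simps)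
  ultimately show ?thesis
    using assms(2) by (simp add: prob_space)
qed

lemma (in prob_space) integral_mult_indep_components:
  assumes "indep_vars M' X I" "i \<in> I" "j \<in> I" "i \<noteq> j"
    and "g \<in> borel_measurable (M' i)" "h \<in> borel_measurable (M' j)"
    and "integrable M (\<lambda>\<omega>. g (X i \<omega>))" "integrable M (\<lambda>\<omega>. h (X j \<omega>) :: real)"
  shows "(\<integral>\<omega>. g (X i \<omega>) * h (X j \<omega>) \<partial>M) = (\<integral>\<omega>. g (X i \<omega>) \<partial>M) * (\<integral>\<omega>. h (X j \<omega>) \<partial>M)"
proof -
  have "indep_var (PiM {i} M') (\<lambda>\<omega>. restrict (\<lambda>k. X k \<omega>) {i}) (PiM {j} M') (\<lambda>\<omega>. restrict (\<lambda>k. X k \<omega>) {j})"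
    using assms(1-4) by (intro indep_var_restrict) auto
  from indep_var_compose[OF this, of "\<lambda>f. g (f i)" borel "\<lambda>f. h (f j)" borel]
  have "indep_var borel (\<lambda>\<omega>. g (X i \<omega>)) borel (\<lambda>\<omega>. h (X j \<omega>))"
    using assms(5,6) by (simp add: comp_def)
  then show ?thesis
    using assms(7,8) by (rule indep_var_lebesgue_integral)
qed

lemma sum_indicator_mult:
  fixes f :: "'a \<Rightarrow> real"
  assumes "finite A" "S \<subseteq> A"
  shows "(\<Sum>x\<in>A. (if x \<in> S then c else 0) * f x) = c * sum f S"
proof -
  have "(\<Sum>x\<in>A. (if x \<in> S then c else 0) * f x) = (\<Sum>x\<in>A. if x \<in> S then c * f x else 0)"
    by (intro sum.cong) auto
  also have "\<dots> = (\<Sum>x\<in>A \<inter> S. c * f x)"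
    using assms(1) by (rule sum.inter_restrict[symmetric])
  finally show ?thesis
    using assms(2) by (simp add: Int_absorb1 sum_distrib_left)
qed

lemma sum_if_eq_card_mult:
  "finite A \<Longrightarrow> (\<Sum>x\<in>A. if P x then c else 0) = real (card {x \<in> A. P x}) * c"
  by (simp add: sum.inter_filter[symmetric])

(* The hypothesis covers the empty average, where HOL's division gives (m x + e) / 0 = 0. *)
lemma shrinkage_error_eq:
  fixes m :: nat
  assumes "m = 0 \<Longrightarrow> w = 0"
  shows "(1 - w) * x0 + w * ((real m * x + e) / real m) - x = (w - 1) * (x - x0) + w / real m * e"
  using assms by (cases "m = 0") (simp_all add: field_simps)

lemma sum_family_eq_sum_count:
  assumes "finite V" "finite B" "\<And>n. n \<in> B \<Longrightarrow> F n \<subseteq> V"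
  shows "(\<Sum>n\<in>B. \<Sum>x\<in>F n. g x) = (\<Sum>x\<in>V. real (card {n\<in>B. x \<in> F n}) * g x)"
proof -
  have "(\<Sum>n\<in>B. \<Sum>x\<in>F n. g x) = (\<Sum>n\<in>B. \<Sum>x\<in>{x\<in>V. x \<in> F n}. g x)"
    using assms(3) by (intro sum.cong) auto
  also have "\<dots> = (\<Sum>x\<in>V. \<Sum>n\<in>{n\<in>B. x \<in> F n}. g x)"
    using assms(2,1) by (rule sum.swap_restrict)
  finally show ?thesis
    by simp
qed

locale trip_model = prob_space M
  for M :: "'a measure" and Seg :: "'s set" and N :: nat and Y :: "nat \<Rightarrow> 's set"
    and \<theta> :: "'s \<Rightarrow> 'a \<Rightarrow> real" and \<epsilon> :: "nat \<Rightarrow> 's \<Rightarrow> 'a \<Rightarrow> real"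
    and \<mu> \<tau> :: real and \<sigma> :: "'s \<Rightarrow> 's \<Rightarrow> real" +
  assumes finite_Seg: "finite Seg"
    and routes_subset: "n \<in> {1..N} \<Longrightarrow> Y n \<subseteq> Seg"
    and theta_square_integrable: "s \<in> Seg \<Longrightarrow> square_integrable M (\<theta> s)"
    and theta_indep: "indep_vars (\<lambda>_. borel) \<theta> Seg"
    and theta_mean: "s \<in> Seg \<Longrightarrow> integral\<^sup>L M (\<theta> s) = \<mu>"
    and theta_variance: "s \<in> Seg \<Longrightarrow> (\<integral>\<omega>. (\<theta> s \<omega> - \<mu>)\<^sup>2 \<partial>M) = \<tau>\<^sup>2"
    and eps_square_integrable: "n \<in> {1..N} \<Longrightarrow> s \<in> Y n \<Longrightarrow> square_integrable M (\<epsilon> n s)"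
    and eps_mean: "n \<in> {1..N} \<Longrightarrow> s \<in> Y n \<Longrightarrow> integral\<^sup>L M (\<epsilon> n s) = 0"
    and eps_cov: "n \<in> {1..N} \<Longrightarrow> s \<in> Y n \<Longrightarrow> t \<in> Y n \<Longrightarrow> (\<integral>\<omega>. \<epsilon> n s \<omega> * \<epsilon> n t \<omega> \<partial>M) = \<sigma> s t"
    and blocks_indep: "indep_vars
        (\<lambda>i. case i of None \<Rightarrow> PiM Seg (\<lambda>_. borel) | Some n \<Rightarrow> PiM (Y n) (\<lambda>_. borel))
        (\<lambda>i \<omega>. case i of None \<Rightarrow> restrict (\<lambda>s. \<theta> s \<omega>) Seg | Some n \<Rightarrow> restrict (\<lambda>s. \<epsilon> n s \<omega>) (Y n))
        (insert None (Some ` {1..N}))"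
begin

definition trip_error :: "nat \<Rightarrow> ('s \<Rightarrow> real) \<Rightarrow> 'a \<Rightarrow> real" where
  "trip_error n c \<omega> = (\<Sum>s\<in>Y n. c s * \<epsilon> n s \<omega>)"

definition noise :: "('s \<Rightarrow> real) \<Rightarrow> (nat \<Rightarrow> 's \<Rightarrow> real) \<Rightarrow> 'a \<Rightarrow> real" where
  "noise a b \<omega> = (\<Sum>s\<in>Seg. a s * (\<theta> s \<omega> - \<mu>)) + (\<Sum>n\<in>{1..N}. trip_error n (b n) \<omega>)"

lemma finite_route: "n \<in> {1..N} \<Longrightarrow> finite (Y n)"
  using finite_subset[OF routes_subset finite_Seg] .

lemma square_integrable_theta_dev: "s \<in> Seg \<Longrightarrow> square_integrable M (\<lambda>\<omega>. \<theta> s \<omega> - \<mu>)"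
  by (intro square_integrable_diff_const theta_square_integrable)

lemma square_integrable_trip_error: "n \<in> {1..N} \<Longrightarrow> square_integrable M (trip_error n c)"
  unfolding trip_error_def
  by (intro square_integrable_sum square_integrable_cmult eps_square_integrable)

lemma square_integrable_noise: "square_integrable M (noise a b)"
  unfolding noise_def
  by (intro square_integrable_add square_integrable_sum square_integrable_cmult
      square_integrable_theta_dev square_integrable_trip_error)

lemma integral_theta_dev: "s \<in> Seg \<Longrightarrow> (\<integral>\<omega>. \<theta> s \<omega> - \<mu> \<partial>M) = 0"
  using integrable_if_square_integrable[OF theta_square_integrable]
  by (simp add: theta_mean prob_space)

lemma integral_trip_error: "n \<in> {1..N} \<Longrightarrow> integral\<^sup>L M (trip_error n c) = 0"
  unfolding trip_error_def
  by (simp add: eps_mean integrable_if_square_integrable eps_square_integrable)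

lemma integral_noise: "integral\<^sup>L M (noise a b) = 0"
proof -
  have theta: "integrable M (\<lambda>\<omega>. a s * (\<theta> s \<omega> - \<mu>))" if "s \<in> Seg" for s
    using that by (intro integrable_mult_right integrable_if_square_integrable square_integrable_theta_dev)
  have trip: "integrable M (trip_error n (b n))" if "n \<in> {1..N}" for n
    using that by (intro integrable_if_square_integrable square_integrable_trip_error)
  have "integral\<^sup>L M (noise a b) = (\<integral>\<omega>. (\<Sum>s\<in>Seg. a s * (\<theta> s \<omega> - \<mu>)) \<partial>M)
      + (\<integral>\<omega>. (\<Sum>n\<in>{1..N}. trip_error n (b n) \<omega>) \<partial>M)"
    unfolding noise_def using theta trip
    by (intro Bochner_Integration.integral_add integrable_sum) auto
  also have "\<dots> = (\<Sum>s\<in>Seg. \<integral>\<omega>. a s * (\<theta> s \<omega> - \<mu>) \<partial>M)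
      + (\<Sum>n\<in>{1..N}. integral\<^sup>L M (trip_error n (b n)))"
    using theta trip by (simp add: Bochner_Integration.integral_sum)
  finally show ?thesis
    by (simp add: integral_theta_dev integral_trip_error)
qed

lemma integral_theta_dev_mult:
  assumes "s \<in> Seg" "t \<in> Seg"
  shows "(\<integral>\<omega>. (\<theta> s \<omega> - \<mu>) * (\<theta> t \<omega> - \<mu>) \<partial>M) = (if s = t then \<tau>\<^sup>2 else 0)"
proof (cases "s = t")
  case True
  then show ?thesis
    using theta_variance[OF assms(1)] by (simp add: power2_eq_square)
next
  case False
  have "(\<integral>\<omega>. (\<theta> s \<omega> - \<mu>) * (\<theta> t \<omega> - \<mu>) \<partial>M)
      = (\<integral>\<omega>. \<theta> s \<omega> - \<mu> \<partial>M) * (\<integral>\<omega>. \<theta> t \<omega> - \<mu> \<partial>M)"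
    using assms False
    by (intro integral_mult_indep_components[OF theta_indep, where g = "\<lambda>x. x - \<mu>" and h = "\<lambda>x. x - \<mu>"])
      (auto intro: integrable_if_square_integrable square_integrable_theta_dev)
  then show ?thesis
    using False by (simp add: integral_theta_dev assms)
qed

lemma integral_theta_dev_mult_trip_error:
  assumes "s \<in> Seg" "n \<in> {1..N}"
  shows "(\<integral>\<omega>. (\<theta> s \<omega> - \<mu>) * trip_error n c \<omega> \<partial>M) = 0"
  using integral_mult_indep_components[OF blocks_indep, of None "Some n"
      "\<lambda>f. f s - \<mu>" "\<lambda>f. \<Sum>t\<in>Y n. c t * f t"] assms
  by (simp add: trip_error_def integrable_if_square_integrable square_integrable_theta_dev
      eps_square_integrable integral_theta_dev)

lemma integral_trip_error_mult:
  assumes "n \<in> {1..N}" "m \<in> {1..N}"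
  shows "(\<integral>\<omega>. trip_error n c \<omega> * trip_error m c' \<omega> \<partial>M)
    = (if n = m then \<Sum>s\<in>Y n. \<Sum>t\<in>Y n. c s * c' t * \<sigma> s t else 0)"
proof (cases "n = m")
  case True
  have "(\<integral>\<omega>. trip_error n c \<omega> * trip_error n c' \<omega> \<partial>M)
      = (\<Sum>s\<in>Y n. \<Sum>t\<in>Y n. \<integral>\<omega>. c s * \<epsilon> n s \<omega> * (c' t * \<epsilon> n t \<omega>) \<partial>M)"
    unfolding trip_error_def using assms(1)
    by (intro integral_sum_mult_sum square_integrable_cmult eps_square_integrable)
  also have "\<dots> = (\<Sum>s\<in>Y n. \<Sum>t\<in>Y n. c s * c' t * \<sigma> s t)"
    using assms(1) by (intro sum.cong refl) (simp add: eps_cov mult_ac)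
  finally show ?thesis
    using True by simp
next
  case False
  show ?thesis
    using integral_mult_indep_components[OF blocks_indep, of "Some n" "Some m"
        "\<lambda>f. \<Sum>t\<in>Y n. c t * f t" "\<lambda>f. \<Sum>t\<in>Y m. c' t * f t"] assms False
    by (simp add: trip_error_def integrable_if_square_integrable eps_square_integrable eps_mean)
qed

lemma integral_noise_mult:
  "(\<integral>\<omega>. noise a b \<omega> * noise a' b' \<omega> \<partial>M)
    = \<tau>\<^sup>2 * (\<Sum>s\<in>Seg. a s * a' s) + (\<Sum>n\<in>{1..N}. \<Sum>s\<in>Y n. \<Sum>t\<in>Y n. b n s * b' n t * \<sigma> s t)"
proof -
  define X where "X a \<omega> = (\<Sum>s\<in>Seg. a s * (\<theta> s \<omega> - \<mu>))" for a \<omega>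
  define Z where "Z b \<omega> = (\<Sum>n\<in>{1..N}. trip_error n (b n) \<omega>)" for b \<omega>
  have sq_X: "square_integrable M (X a)" for a
    unfolding X_def by (intro square_integrable_sum square_integrable_cmult square_integrable_theta_dev)
  have sq_Z: "square_integrable M (Z b)" for b
    unfolding Z_def by (intro square_integrable_sum square_integrable_trip_error)
  have XX: "(\<integral>\<omega>. X a \<omega> * X a' \<omega> \<partial>M) = \<tau>\<^sup>2 * (\<Sum>s\<in>Seg. a s * a' s)"
  proof -
    have "(\<integral>\<omega>. X a \<omega> * X a' \<omega> \<partial>M)
        = (\<Sum>s\<in>Seg. \<Sum>t\<in>Seg. \<integral>\<omega>. a s * (\<theta> s \<omega> - \<mu>) * (a' t * (\<theta> t \<omega> - \<mu>)) \<partial>M)"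
      unfolding X_def by (intro integral_sum_mult_sum square_integrable_cmult square_integrable_theta_dev)
    also have "\<dots> = (\<Sum>s\<in>Seg. \<Sum>t\<in>Seg. if s = t then a s * a' s * \<tau>\<^sup>2 else 0)"
      by (intro sum.cong refl) (simp add: integral_scaled_mult integral_theta_dev_mult)
    finally show ?thesis
      using finite_Seg by (simp add: sum_distrib_left mult_ac)
  qed
  have XZ: "(\<integral>\<omega>. X a \<omega> * Z b \<omega> \<partial>M) = 0" for a b
  proof -
    have "(\<integral>\<omega>. X a \<omega> * Z b \<omega> \<partial>M)
        = (\<Sum>s\<in>Seg. \<Sum>n\<in>{1..N}. \<integral>\<omega>. a s * (\<theta> s \<omega> - \<mu>) * trip_error n (b n) \<omega> \<partial>M)"
      unfolding X_def Z_def
      by (intro integral_sum_mult_sum square_integrable_cmult square_integrable_theta_dev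
          square_integrable_trip_error)
    then show ?thesis
      by (simp add: mult.assoc integral_theta_dev_mult_trip_error)
  qed
  have ZZ: "(\<integral>\<omega>. Z b \<omega> * Z b' \<omega> \<partial>M) = (\<Sum>n\<in>{1..N}. \<Sum>s\<in>Y n. \<Sum>t\<in>Y n. b n s * b' n t * \<sigma> s t)"
  proof -
    have "(\<integral>\<omega>. Z b \<omega> * Z b' \<omega> \<partial>M)
        = (\<Sum>n\<in>{1..N}. \<Sum>m\<in>{1..N}. \<integral>\<omega>. trip_error n (b n) \<omega> * trip_error m (b' m) \<omega> \<partial>M)"
      unfolding Z_def by (intro integral_sum_mult_sum square_integrable_trip_error)
    then show ?thesis
      by (simp add: integral_trip_error_mult)
  qed
  have "(\<lambda>\<omega>. noise a b \<omega> * noise a' b' \<omega>)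
      = (\<lambda>\<omega>. X a \<omega> * X a' \<omega> + X a \<omega> * Z b' \<omega> + X a' \<omega> * Z b \<omega> + Z b \<omega> * Z b' \<omega>)"
    by (simp add: noise_def X_def Z_def fun_eq_iff algebra_simps)
  then show ?thesis
    using sq_X sq_Z
    by (simp add: integrable_mult_if_square_integrable XX XZ ZZ)
qed

lemma integral_square_const_add_noise:
  "(\<integral>\<omega>. (c + noise a b \<omega>)\<^sup>2 \<partial>M)
    = c\<^sup>2 + \<tau>\<^sup>2 * (\<Sum>s\<in>Seg. (a s)\<^sup>2) + (\<Sum>n\<in>{1..N}. \<Sum>s\<in>Y n. \<Sum>t\<in>Y n. b n s * b n t * \<sigma> s t)"
  using integral_square_add_centered[OF square_integrable_noise integral_noise, of c a b]
    integral_noise_mult[of a b a b]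
  by (simp add: power2_eq_square)

lemma gseg_block_error_eq_noise:
  assumes "S \<subseteq> Seg" "Ncnt Y N S = 0 \<Longrightarrow> w = 0"
  shows "(1 - w) * real (card S) * \<mu>
      + w * ((\<Sum>n\<in>{n \<in> {1..N}. S \<subseteq> Y n}. \<Sum>s\<in>S. Tobs \<theta> \<epsilon> n s \<omega>) / real (Ncnt Y N S))
      - (\<Sum>s\<in>S. \<theta> s \<omega>)
    = noise (\<lambda>s. if s \<in> S then w - 1 else 0)
        (\<lambda>n s. if S \<subseteq> Y n \<and> s \<in> S then w / real (Ncnt Y N S) else 0) \<omega>"
proof -
  define A where "A = {n \<in> {1..N}. S \<subseteq> Y n}"
  define E where "E = (\<Sum>n\<in>A. \<Sum>s\<in>S. \<epsilon> n s \<omega>)"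
  have fin_S: "finite S"
    using assms(1) finite_Seg by (rule finite_subset)
  have obs: "(\<Sum>n\<in>A. \<Sum>s\<in>S. Tobs \<theta> \<epsilon> n s \<omega>) = real (Ncnt Y N S) * (\<Sum>s\<in>S. \<theta> s \<omega>) + E"
    by (simp add: Tobs_def sum.distrib E_def A_def Ncnt_def)
  have prior: "(\<Sum>s\<in>Seg. (if s \<in> S then w - 1 else 0) * (\<theta> s \<omega> - \<mu>))
      = (w - 1) * ((\<Sum>s\<in>S. \<theta> s \<omega>) - real (card S) * \<mu>)"
    using fin_S by (simp add: sum_indicator_mult[OF finite_Seg assms(1)] sum_subtractf)
  have trips: "(\<Sum>n\<in>{1..N}. trip_error n (\<lambda>s. if S \<subseteq> Y n \<and> s \<in> S then w / real (Ncnt Y N S) else 0) \<omega>)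
      = w / real (Ncnt Y N S) * E"
  proof -
    have "trip_error n (\<lambda>s. if S \<subseteq> Y n \<and> s \<in> S then w / real (Ncnt Y N S) else 0) \<omega>
        = (if S \<subseteq> Y n then w / real (Ncnt Y N S) * (\<Sum>s\<in>S. \<epsilon> n s \<omega>) else 0)"
      if "n \<in> {1..N}" for n
      using sum_indicator_mult[OF finite_route[OF that], of S "w / real (Ncnt Y N S)"]
      by (simp add: trip_error_def)
    then show ?thesis
      by (simp add: sum.inter_filter[symmetric] A_def E_def sum_distrib_left)
  qed
  show ?thesis
    unfolding noise_def prior trips obs[unfolded A_def]
    using shrinkage_error_eq[of "Ncnt Y N S" w "real (card S) * \<mu>" "\<Sum>s\<in>S. \<theta> s \<omega>" E] assms(2)
    by (simp add: mult.assoc)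
qed

lemma integral_block_noise_mult:
  assumes "S \<subseteq> Seg" "T \<subseteq> Seg" "S = T \<or> S \<inter> T = {}"
  shows "(\<integral>\<omega>. noise (\<lambda>s. if s \<in> S then v else 0) (\<lambda>n s. if S \<subseteq> Y n \<and> s \<in> S then k else 0) \<omega>
             * noise (\<lambda>s. if s \<in> T then v' else 0) (\<lambda>n s. if T \<subseteq> Y n \<and> s \<in> T then k' else 0) \<omega> \<partial>M)
    = k * k' * real (Ncnt Y N (S \<union> T)) * (\<Sum>s\<in>S. \<Sum>t\<in>T. \<sigma> s t)
      + (if S = T then v * v' * real (card S) * \<tau>\<^sup>2 else 0)"
proof -
  have prior: "(\<Sum>s\<in>Seg. (if s \<in> S then v else 0) * (if s \<in> T then v' else 0))
      = (if S = T then v * v' * real (card S) else 0)"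
    using assms(3) by (auto simp: sum_indicator_mult[OF finite_Seg assms(1)] disjoint_iff intro!: sum.neutral)
  have trip: "(\<Sum>s\<in>Y n. \<Sum>t\<in>Y n. (if S \<subseteq> Y n \<and> s \<in> S then k else 0)
          * (if T \<subseteq> Y n \<and> t \<in> T then k' else 0) * \<sigma> s t)
      = (if S \<union> T \<subseteq> Y n then k * k' * (\<Sum>s\<in>S. \<Sum>t\<in>T. \<sigma> s t) else 0)"
    if "n \<in> {1..N}" for n
  proof (cases "S \<union> T \<subseteq> Y n")
    case True
    have "(\<Sum>s\<in>Y n. \<Sum>t\<in>Y n. (if s \<in> S then k else 0) * (if t \<in> T then k' else 0) * \<sigma> s t)
        = (\<Sum>s\<in>Y n. (if s \<in> S then k else 0) * (\<Sum>t\<in>Y n. (if t \<in> T then k' else 0) * \<sigma> s t))"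
      by (simp add: sum_distrib_left mult.assoc)
    also have "\<dots> = (\<Sum>s\<in>Y n. (if s \<in> S then k else 0) * (k' * (\<Sum>t\<in>T. \<sigma> s t)))"
      using True by (simp add: sum_indicator_mult[OF finite_route[OF that]])
    also have "\<dots> = k * (\<Sum>s\<in>S. k' * (\<Sum>t\<in>T. \<sigma> s t))"
      using True by (simp add: sum_indicator_mult[OF finite_route[OF that]])
    finally show ?thesis
      using True by (simp add: sum_distrib_left mult.assoc)
  next
    case False
    then have "\<not> S \<subseteq> Y n \<or> \<not> T \<subseteq> Y n"
      by auto
    then show ?thesis
      using False by (auto intro!: sum.neutral)
  qed
  have errors: "(\<Sum>n\<in>{1..N}. \<Sum>s\<in>Y n. \<Sum>t\<in>Y n. (if S \<subseteq> Y n \<and> s \<in> S then k else 0)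
          * (if T \<subseteq> Y n \<and> t \<in> T then k' else 0) * \<sigma> s t)
      = k * k' * real (Ncnt Y N (S \<union> T)) * (\<Sum>s\<in>S. \<Sum>t\<in>T. \<sigma> s t)"
  proof -
    have "(\<Sum>n\<in>{1..N}. \<Sum>s\<in>Y n. \<Sum>t\<in>Y n. (if S \<subseteq> Y n \<and> s \<in> S then k else 0)
          * (if T \<subseteq> Y n \<and> t \<in> T then k' else 0) * \<sigma> s t)
        = (\<Sum>n\<in>{1..N}. if S \<union> T \<subseteq> Y n then k * k' * (\<Sum>s\<in>S. \<Sum>t\<in>T. \<sigma> s t) else 0)"
      by (rule sum.cong[OF refl trip])
    then show ?thesis
      by (simp only: sum_if_eq_card_mult[OF finite_atLeastAtMost] Ncnt_def[symmetric]) (simp add: mult_ac)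
  qed
  show ?thesis
    unfolding integral_noise_mult prior errors by simp
qed

lemma risk_gseg_est:
  assumes "y \<subseteq> Seg" "partition_on y P" "\<And>S. S \<in> P \<Longrightarrow> \<phi> S 0 = 0"
  shows "risk M \<theta> y (gseg_est Y N \<theta> \<epsilon> \<mu> P \<phi>) =
       (\<Sum>S\<in>P. \<Sum>T\<in>P. real (Ncnt Y N (S \<union> T)) / (real (Ncnt Y N S) * real (Ncnt Y N T))
              * \<phi> S (Ncnt Y N S) * \<phi> T (Ncnt Y N T) * (\<Sum>s\<in>S. \<Sum>t\<in>T. \<sigma> s t))
       + (\<Sum>S\<in>P. (1 - \<phi> S (Ncnt Y N S))\<^sup>2 * real (card S) * \<tau>\<^sup>2)"
proof -
  define w where "w S = \<phi> S (Ncnt Y N S)" for S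
  define block where "block S = noise (\<lambda>s. if s \<in> S then w S - 1 else 0)
    (\<lambda>n s. if S \<subseteq> Y n \<and> s \<in> S then w S / real (Ncnt Y N S) else 0)" for S
  have sub: "S \<subseteq> Seg" if "S \<in> P" for S
    using that assms(1,2) by (auto simp: partition_on_def)
  have fin: "finite S" if "S \<in> P" for S
    using sub[OF that] finite_Seg by (rule finite_subset)
  have fin_P: "finite P"
    using assms(1,2) finite_Seg by (metis finite_UnionD finite_subset partition_on_def)
  have disj: "S = T \<or> S \<inter> T = {}" if "S \<in> P" "T \<in> P" for S T
    using assms(2) that by (auto simp: partition_on_def disjoint_def)
  have square_flip: "(x - 1) * (x - 1) = (1 - x)\<^sup>2" for x :: real
    by (simp add: power2_eq_square algebra_simps)
  have error: "gseg_est Y N \<theta> \<epsilon> \<mu> P \<phi> \<omega> - (\<Sum>s\<in>y. \<theta> s \<omega>) = (\<Sum>S\<in>P. block S \<omega>)" for \<omega>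
  proof -
    have "(\<Sum>s\<in>y. \<theta> s \<omega>) = (\<Sum>S\<in>P. \<Sum>s\<in>S. \<theta> s \<omega>)"
      using sum.Union_disjoint[of P "\<lambda>s. \<theta> s \<omega>"] fin disj assms(2)
      by (auto simp: partition_on_def)
    then have "gseg_est Y N \<theta> \<epsilon> \<mu> P \<phi> \<omega> - (\<Sum>s\<in>y. \<theta> s \<omega>)
        = (\<Sum>S\<in>P. (1 - w S) * real (card S) * \<mu>
            + w S * ((\<Sum>n\<in>{n \<in> {1..N}. S \<subseteq> Y n}. \<Sum>s\<in>S. Tobs \<theta> \<epsilon> n s \<omega>) / real (Ncnt Y N S))
            - (\<Sum>s\<in>S. \<theta> s \<omega>))"
      unfolding gseg_est_def w_def by (simp add: sum_subtractf)
    also have "\<dots> = (\<Sum>S\<in>P. block S \<omega>)"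
      unfolding block_def using sub assms(3)
      by (intro sum.cong refl gseg_block_error_eq_noise) (auto simp: w_def)
    finally show ?thesis .
  qed
  have "risk M \<theta> y (gseg_est Y N \<theta> \<epsilon> \<mu> P \<phi>)
      = (\<Sum>S\<in>P. \<Sum>T\<in>P. \<integral>\<omega>. block S \<omega> * block T \<omega> \<partial>M)"
    unfolding risk_def error power2_eq_square block_def
    by (intro integral_sum_mult_sum square_integrable_noise)
  also have "\<dots> = (\<Sum>S\<in>P. \<Sum>T\<in>P. w S / real (Ncnt Y N S) * (w T / real (Ncnt Y N T))
        * real (Ncnt Y N (S \<union> T)) * (\<Sum>s\<in>S. \<Sum>t\<in>T. \<sigma> s t)
      + (if S = T then (w S - 1) * (w T - 1) * real (card S) * \<tau>\<^sup>2 else 0))"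
    unfolding block_def
    by (intro sum.cong refl integral_block_noise_mult sub disj)
  also have "\<dots> = (\<Sum>S\<in>P. \<Sum>T\<in>P. w S / real (Ncnt Y N S) * (w T / real (Ncnt Y N T))
        * real (Ncnt Y N (S \<union> T)) * (\<Sum>s\<in>S. \<Sum>t\<in>T. \<sigma> s t))
      + (\<Sum>S\<in>P. (w S - 1) * (w S - 1) * real (card S) * \<tau>\<^sup>2)"
    using fin_P by (simp add: sum.distrib)
  finally show ?thesis
    by (simp add: w_def square_flip mult_ac)
qed

lemma route_est_error_eq_noise:
  fixes D :: "'s set set" and \<phi>D :: "nat \<Rightarrow> real"
  assumes "y \<subseteq> Seg"
  defines "w \<equiv> \<phi>D (Mnb Y N D)"
  shows "route_est Y N \<theta> \<epsilon> \<mu> y D \<phi>D \<omega> - (\<Sum>s\<in>y. \<theta> s \<omega>)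
    = w * (ybar Y N D - real (card y)) * \<mu>
      + noise (\<lambda>s. w / real (Mnb Y N D) * real (Nnb1 Y N D s) - (if s \<in> y then 1 else 0))
          (\<lambda>n s. if Y n \<in> D then w / real (Mnb Y N D) else 0) \<omega>"
proof -
  define B where "B = {n \<in> {1..N}. Y n \<in> D}"
  define k where "k = w / real (Mnb Y N D)"
  define E where "E = (\<Sum>n\<in>B. \<Sum>s\<in>Y n. \<epsilon> n s \<omega>)"
  have count: "card {n \<in> B. s \<in> Y n} = Nnb1 Y N D s" for s
    unfolding B_def Nnb1_def by (rule arg_cong[where f = card]) auto
  have family: "(\<Sum>n\<in>B. \<Sum>s\<in>Y n. g s) = (\<Sum>s\<in>Seg. real (Nnb1 Y N D s) * g s)" for g
    unfolding count[symmetric]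
    by (rule sum_family_eq_sum_count[OF finite_Seg]) (use routes_subset in \<open>auto simp: B_def\<close>)
  have ybar: "w * ybar Y N D = k * (\<Sum>s\<in>Seg. real (Nnb1 Y N D s))"
    using family[of "\<lambda>_. 1"] by (simp add: ybar_def k_def B_def Mnb_def)
  have prior: "(\<Sum>s\<in>Seg. (k * real (Nnb1 Y N D s) - (if s \<in> y then 1 else 0)) * (\<theta> s \<omega> - \<mu>))
      = k * (\<Sum>s\<in>Seg. real (Nnb1 Y N D s) * \<theta> s \<omega>) - k * \<mu> * (\<Sum>s\<in>Seg. real (Nnb1 Y N D s))
        - (\<Sum>s\<in>y. \<theta> s \<omega>) + real (card y) * \<mu>"
    using sum_indicator_mult[OF finite_Seg assms(1), of 1 "\<lambda>s. \<theta> s \<omega> - \<mu>"]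
      finite_subset[OF assms(1) finite_Seg]
    by (simp add: left_diff_distrib sum_subtractf sum_distrib_left right_diff_distrib mult_ac)
  have "trip_error n (\<lambda>s. if Y n \<in> D then k else 0) \<omega> = (if Y n \<in> D then k * (\<Sum>s\<in>Y n. \<epsilon> n s \<omega>) else 0)"
    for n by (simp add: trip_error_def sum_distrib_left)
  then have trips: "(\<Sum>n\<in>{1..N}. trip_error n (\<lambda>s. if Y n \<in> D then k else 0) \<omega>) = k * E"
    unfolding E_def B_def sum.inter_filter[OF finite_atLeastAtMost] sum_distrib_left
    by (intro sum.cong) (auto simp: sum_distrib_left)
  have obs: "(\<Sum>n\<in>B. \<Sum>s\<in>Y n. Tobs \<theta> \<epsilon> n s \<omega>) = (\<Sum>s\<in>Seg. real (Nnb1 Y N D s) * \<theta> s \<omega>) + E"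
    by (simp add: Tobs_def sum.distrib family E_def)
  have "route_est Y N \<theta> \<epsilon> \<mu> y D \<phi>D \<omega>
      = (1 - w) * real (card y) * \<mu> + k * ((\<Sum>s\<in>Seg. real (Nnb1 Y N D s) * \<theta> s \<omega>) + E)"
    unfolding route_est_def B_def[symmetric] w_def[symmetric] obs by (simp add: k_def)
  then show ?thesis
    unfolding noise_def k_def[symmetric] prior trips
    by (simp add: algebra_simps ybar)
qed

lemma risk_route_est:
  fixes D :: "'s set set" and \<phi>D :: "nat \<Rightarrow> real"
  assumes "y \<subseteq> Seg" "D \<subseteq> Y ` {1..N}"
  shows "risk M \<theta> y (route_est Y N \<theta> \<epsilon> \<mu> y D \<phi>D) =
       (\<phi>D (Mnb Y N D) / real (Mnb Y N D))\<^sup>2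
          * (\<Sum>s\<in>\<Union>D. \<Sum>t\<in>\<Union>D. real (Nnb2 Y N D s t) * \<sigma> s t)
       + (\<phi>D (Mnb Y N D) * (ybar Y N D - real (card y)) * \<mu>)\<^sup>2
       + (\<Sum>s\<in>\<Union>D - y. (\<phi>D (Mnb Y N D) * real (Nnb1 Y N D s) / real (Mnb Y N D))\<^sup>2 * \<tau>\<^sup>2)
       + (\<Sum>s\<in>y. (1 - \<phi>D (Mnb Y N D) * real (Nnb1 Y N D s) / real (Mnb Y N D))\<^sup>2 * \<tau>\<^sup>2)"
proof -
  define w where "w = \<phi>D (Mnb Y N D)"
  define k where "k = w / real (Mnb Y N D)"
  define B where "B = {n \<in> {1..N}. Y n \<in> D}"
  define a where "a s = k * real (Nnb1 Y N D s) - (if s \<in> y then 1 else 0)" for s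
  have U_sub: "\<Union>D \<subseteq> Seg"
    using assms(2) routes_subset by blast
  have fin_U: "finite (\<Union>D)" and fin_y: "finite y"
    using U_sub assms(1) finite_Seg by (auto intro: finite_subset)
  have Nnb1_outside: "Nnb1 Y N D s = 0" if "s \<notin> \<Union>D" for s
    using that by (auto simp: Nnb1_def)
  have prior: "(\<Sum>s\<in>Seg. (a s)\<^sup>2)
      = (\<Sum>s\<in>\<Union>D - y. (w * real (Nnb1 Y N D s) / real (Mnb Y N D))\<^sup>2)
        + (\<Sum>s\<in>y. (1 - w * real (Nnb1 Y N D s) / real (Mnb Y N D))\<^sup>2)"
  proof -
    have "(\<Sum>s\<in>Seg. (a s)\<^sup>2) = (\<Sum>s\<in>(\<Union>D - y) \<union> y. (a s)\<^sup>2)"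
      using U_sub assms(1) Nnb1_outside
      by (intro sum.mono_neutral_right finite_Seg) (auto simp: a_def)
    also have "\<dots> = (\<Sum>s\<in>\<Union>D - y. (a s)\<^sup>2) + (\<Sum>s\<in>y. (a s)\<^sup>2)"
      using fin_U fin_y by (intro sum.union_disjoint) auto
    also have "\<dots> = (\<Sum>s\<in>\<Union>D - y. (w * real (Nnb1 Y N D s) / real (Mnb Y N D))\<^sup>2)
        + (\<Sum>s\<in>y. (1 - w * real (Nnb1 Y N D s) / real (Mnb Y N D))\<^sup>2)"
      by (intro arg_cong2[where f = "(+)"] sum.cong refl)
        (auto simp: a_def k_def power2_eq_square algebra_simps)
    finally show ?thesis .
  qed
  have errors: "(\<Sum>n\<in>{1..N}. \<Sum>s\<in>Y n. \<Sum>t\<in>Y n. (if Y n \<in> D then k else 0) * (if Y n \<in> D then k else 0) * \<sigma> s t)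
      = k\<^sup>2 * (\<Sum>s\<in>\<Union>D. \<Sum>t\<in>\<Union>D. real (Nnb2 Y N D s t) * \<sigma> s t)"
  proof -
    have count: "card {n \<in> B. p \<in> Y n \<times> Y n} = Nnb2 Y N D (fst p) (snd p)" for p
      unfolding B_def Nnb2_def by (rule arg_cong[where f = card]) (auto simp: mem_Times_iff)
    have "(\<Sum>n\<in>{1..N}. \<Sum>s\<in>Y n. \<Sum>t\<in>Y n. (if Y n \<in> D then k else 0) * (if Y n \<in> D then k else 0) * \<sigma> s t)
        = k\<^sup>2 * (\<Sum>n\<in>B. \<Sum>p\<in>Y n \<times> Y n. \<sigma> (fst p) (snd p))"
      unfolding B_def sum.inter_filter[OF finite_atLeastAtMost] sum_distrib_left
      by (intro sum.cong refl) (auto simp: sum.cartesian_product' sum_distrib_left power2_eq_square mult_ac)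
    also have "(\<Sum>n\<in>B. \<Sum>p\<in>Y n \<times> Y n. \<sigma> (fst p) (snd p))
        = (\<Sum>p\<in>\<Union>D \<times> \<Union>D. real (Nnb2 Y N D (fst p) (snd p)) * \<sigma> (fst p) (snd p))"
      unfolding count[symmetric]
      by (rule sum_family_eq_sum_count) (use fin_U in \<open>auto simp: B_def\<close>)
    finally show ?thesis
      by (simp add: sum.cartesian_product')
  qed
  have "risk M \<theta> y (route_est Y N \<theta> \<epsilon> \<mu> y D \<phi>D)
      = (w * (ybar Y N D - real (card y)) * \<mu>)\<^sup>2 + \<tau>\<^sup>2 * (\<Sum>s\<in>Seg. (a s)\<^sup>2)
        + (\<Sum>n\<in>{1..N}. \<Sum>s\<in>Y n. \<Sum>t\<in>Y n. (if Y n \<in> D then k else 0) * (if Y n \<in> D then k else 0) * \<sigma> s t)"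
    unfolding risk_def route_est_error_eq_noise[OF assms(1)] integral_square_const_add_noise a_def k_def w_def ..
  then show ?thesis
    unfolding prior errors by (simp add: k_def w_def sum_distrib_left algebra_simps)
qed

end

theorem proposition2p3:
  fixes M :: "'a measure"
    and Seg :: "'s set" and N :: nat and Y :: "nat \<Rightarrow> 's set"
    and \<theta> :: "'s \<Rightarrow> 'a \<Rightarrow> real" and \<epsilon> :: "nat \<Rightarrow> 's \<Rightarrow> 'a \<Rightarrow> real"
    and \<mu> \<tau> :: real and \<sigma> :: "'s \<Rightarrow> 's \<Rightarrow> real"
    and y :: "'s set"
    and P :: "'s set set" and \<phi> :: "'s set \<Rightarrow> nat \<Rightarrow> real"
    and D :: "'s set set" and \<phi>D :: "nat \<Rightarrow> real"
  assumes prob: "prob_space M"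
    and finSeg: "finite Seg"
    and routes: "\<And>n. n \<in> {1..N} \<Longrightarrow> Y n \<noteq> {} \<and> Y n \<subseteq> Seg"
    (* theta: i.i.d. with mean mu and variance tau^2 *)
    and th_meas: "\<And>s. s \<in> Seg \<Longrightarrow> \<theta> s \<in> borel_measurable M"
    and th_int: "\<And>s. s \<in> Seg \<Longrightarrow> integrable M (\<theta> s)"
    and th_int2: "\<And>s. s \<in> Seg \<Longrightarrow> integrable M (\<lambda>\<omega>. (\<theta> s \<omega>)\<^sup>2)"
    and th_indep: "prob_space.indep_vars M (\<lambda>_. borel) \<theta> Seg"
    and th_ident: "\<And>s t. s \<in> Seg \<Longrightarrow> t \<in> Seg \<Longrightarrow> distr M borel (\<theta> s) = distr M borel (\<theta> t)"
    and th_mean: "\<And>s. s \<in> Seg \<Longrightarrow> integral\<^sup>L M (\<theta> s) = \<mu>"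
    and th_var: "\<And>s. s \<in> Seg \<Longrightarrow> integral\<^sup>L M (\<lambda>\<omega>. (\<theta> s \<omega> - \<mu>)\<^sup>2) = \<tau>\<^sup>2"
    (* errors: mean 0, covariances sigma within a trip *)
    and eps_meas: "\<And>n s. n \<in> {1..N} \<Longrightarrow> s \<in> Y n \<Longrightarrow> \<epsilon> n s \<in> borel_measurable M"
    and eps_int: "\<And>n s. n \<in> {1..N} \<Longrightarrow> s \<in> Y n \<Longrightarrow> integrable M (\<epsilon> n s)"
    and eps_int2: "\<And>n s. n \<in> {1..N} \<Longrightarrow> s \<in> Y n \<Longrightarrow> integrable M (\<lambda>\<omega>. (\<epsilon> n s \<omega>)\<^sup>2)"
    and eps_mean: "\<And>n s. n \<in> {1..N} \<Longrightarrow> s \<in> Y n \<Longrightarrow> integral\<^sup>L M (\<epsilon> n s) = 0"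
    and eps_cov: "\<And>n s t. n \<in> {1..N} \<Longrightarrow> s \<in> Y n \<Longrightarrow> t \<in> Y n \<Longrightarrow>
        integral\<^sup>L M (\<lambda>\<omega>. (\<epsilon> n s \<omega> - integral\<^sup>L M (\<epsilon> n s)) * (\<epsilon> n t \<omega> - integral\<^sup>L M (\<epsilon> n t))) = \<sigma> s t"
    (* theta independent of the errors; error vectors of different trips independent *)
    and indep: "prob_space.indep_vars M
        (\<lambda>i. case i of None \<Rightarrow> PiM Seg (\<lambda>_. borel) | Some n \<Rightarrow> PiM (Y n) (\<lambda>_. borel))
        (\<lambda>i \<omega>. case i of None \<Rightarrow> restrict (\<lambda>s. \<theta> s \<omega>) Seg | Some n \<Rightarrow> restrict (\<lambda>s. \<epsilon> n s \<omega>) (Y n))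
        (insert None (Some ` {1..N}))"
    (* the fixed route *)
    and y_sub: "y \<subseteq> Seg"
    (* part (1): super-segment partition and shrinkage functions *)
    and part: "partition_on y P"
    and phi0: "\<And>S. S \<in> P \<Longrightarrow> \<phi> S 0 = 0"
    (* part (2): neighbourhood of historical routes *)
    and D_hist: "D \<subseteq> Y ` {1..N}"
    and phiD0: "\<phi>D 0 = 0"
  shows
    "risk M \<theta> y (gseg_est Y N \<theta> \<epsilon> \<mu> P \<phi>) =
       (\<Sum>S\<in>P. \<Sum>T\<in>P. real (Ncnt Y N (S \<union> T)) / (real (Ncnt Y N S) * real (Ncnt Y N T))
              * \<phi> S (Ncnt Y N S) * \<phi> T (Ncnt Y N T) * (\<Sum>s\<in>S. \<Sum>t\<in>T. \<sigma> s t))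
       + (\<Sum>S\<in>P. (1 - \<phi> S (Ncnt Y N S))\<^sup>2 * real (card S) * \<tau>\<^sup>2)
     \<and>
     risk M \<theta> y (route_est Y N \<theta> \<epsilon> \<mu> y D \<phi>D) =
       (\<phi>D (Mnb Y N D) / real (Mnb Y N D))\<^sup>2
          * (\<Sum>s\<in>\<Union>D. \<Sum>t\<in>\<Union>D. real (Nnb2 Y N D s t) * \<sigma> s t)
       + (\<phi>D (Mnb Y N D) * (ybar Y N D - real (card y)) * \<mu>)\<^sup>2
       + (\<Sum>s\<in>\<Union>D - y. (\<phi>D (Mnb Y N D) * real (Nnb1 Y N D s) / real (Mnb Y N D))\<^sup>2 * \<tau>\<^sup>2)
       + (\<Sum>s\<in>y. (1 - \<phi>D (Mnb Y N D) * real (Nnb1 Y N D s) / real (Mnb Y N D))\<^sup>2 * \<tau>\<^sup>2)"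
proof -
  (* Not needed: identical distribution of the theta_s and nonempty routes (only first and second
     moments enter), and phiD 0 = 0 (for an empty neighbourhood both sides equal
     (phiD 0 * |y| * mu)^2 + |y| tau^2 under the 0/0 = 0 convention). *)
  have cov: "(\<integral>\<omega>. \<epsilon> n s \<omega> * \<epsilon> n t \<omega> \<partial>M) = \<sigma> s t"
    if "n \<in> {1..N}" "s \<in> Y n" "t \<in> Y n" for n s t
    using eps_cov[OF that] eps_mean[OF that(1,2)] eps_mean[OF that(1,3)] by simp
  interpret trip_model M Seg N Y \<theta> \<epsilon> \<mu> \<tau> \<sigma>
    using prob finSeg routes th_meas th_int2 th_indep th_mean th_var eps_meas eps_int2 eps_mean cov indep
    by (auto simp: trip_model_def trip_model_axioms_def square_integrable_def)
  show ?thesis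
    using risk_gseg_est[OF y_sub part, of \<phi>] risk_route_est[OF y_sub D_hist] phi0 by blast
qed

end
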